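(* Let $K_2>0$ be a constant such that every analytic function $g\colon\mathbb{D}\to G$ satisfies $\|g\|_{L^2(\mathbb{D},\mathcal{A})}\le K_2|g(0)|$ (such a constant exists). Then for every $z_0\in\mathbb{C}$, $r>0$ and every analytic function $f\colon D(z_0,r)\to G$, $$\mathcal{A}\big(\{z\in D(z_0,r):\operatorname{Re}f(z)>\operatorname{Re}f(z_0)/2\}\big)\ge\frac{1}{8K_2^2}\,\mathcal{A}\big(D(z_0,r)\big).$$
   Context: $\mathbb{D}$ is the open unit disk, $D(z_0,r)$ the open disk of center $z_0$ and radius $r$, $\mathcal{A}$ the normalized area measure $dx\,dy/\pi$ on $\mathbb{C}$, and $G=\{z\in\mathbb{C}\setminus\{0\}:|\arg z|<\pi/4\}$. *)

theory Defs
  imports "HOL-Complex_Analysis.Complex_Analysis"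
begin

definition sectorG :: "complex set" where
  "sectorG = {z. z \<noteq> 0 \<and> \<bar>Arg z\<bar> < pi / 4}"

definition area_measure :: "complex set \<Rightarrow> ennreal" where
  "area_measure S = emeasure lborel S / ennreal pi"

definition L2_norm_sq_disk :: "(complex \<Rightarrow> complex) \<Rightarrow> ennreal" where
  "L2_norm_sq_disk g =
     (\<integral>\<^sup>+ z. indicator (ball 0 1) z * ennreal ((cmod (g z))\<^sup>2) \<partial>lborel) / ennreal pi"

end

theory Submission
  imports Defs
begin

text \<open>
  Rescale, \<open>g(w) = f(z\<^sub>0 + s w)\<close> with \<open>s < r\<close>, so that \<open>g\<close> is holomorphic near the closed unit
  disk, and let \<open>s \<rightarrow> r\<close> at the end. Put \<open>a = Re g(0)\<close>. The mean value property gives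
  \<open>\<integral>\<^sub>\<bbbD> Re g = \<pi> a\<close>, and since \<open>|w|\<^sup>2 \<le> 2 (Re w)\<^sup>2\<close> on \<open>G\<close> the hypothesis gives
  \<open>\<integral>\<^sub>\<bbbD> |g|\<^sup>2 \<le> 2\<pi> K\<^sub>2\<^sup>2 a\<^sup>2\<close>. On \<open>E = {Re g > a/2}\<close> bound \<open>Re g \<le> |g| \<le> t|g|\<^sup>2/2 + 1/(2t)\<close>,
  elsewhere \<open>Re g \<le> a/2\<close>; integrating and optimising in \<open>t\<close> yields \<open>(\<pi> a)\<^sup>2 \<le> 8\<pi> K\<^sub>2\<^sup>2 a\<^sup>2 |E|\<close>.
  The mean value property follows by integrating the Taylor series of \<open>g\<close> termwise:
  \<open>\<integral>\<^sub>\<bbbD> z\<^sup>n = 0\<close> for \<open>n \<ge> 1\<close>, because the rotation by the angle \<open>\<pi>/n\<close> preserves Lebesgue measure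
  and negates \<open>z\<^sup>n\<close>.
\<close>

lemma borel_measurable_linear:
  fixes f :: "'a::euclidean_space \<Rightarrow> 'b::real_normed_vector"
  assumes "linear f"
  shows "f \<in> borel_measurable borel"
  using assms by (intro borel_measurable_continuous_onI linear_continuous_on)
    (simp add: linear_conv_bounded_linear)

text \<open>The library proves invariance of Lebesgue measure under orthogonal maps only on \<open>real^'n\<close>;
  it is transported to \<open>\<complex>\<close> along the following isometry.\<close>

definition vec_of_complex :: "complex \<Rightarrow> real^2" where
  "vec_of_complex z = vector [Re z, Im z]"

definition complex_of_vec :: "real^2 \<Rightarrow> complex" where
  "complex_of_vec v = Complex (v$1) (v$2)"

lemma complex_of_vec_of_complex [simp]: "complex_of_vec (vec_of_complex z) = z"
  by (simp add: complex_of_vec_def vec_of_complex_def)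

lemma linear_vec_of_complex: "linear vec_of_complex"
  by (rule linearI) (auto simp: vec_of_complex_def vec_eq_iff forall_2)

lemma linear_complex_of_vec: "linear complex_of_vec"
  by (rule linearI) (auto simp: complex_of_vec_def complex_eq_iff)

lemmas borel_measurable_vec_of_complex [measurable] =
  borel_measurable_linear[OF linear_vec_of_complex]

lemmas borel_measurable_complex_of_vec [measurable] =
  borel_measurable_linear[OF linear_complex_of_vec]

lemma distr_lborel_vec_of_complex: "distr lborel borel vec_of_complex = lborel"
proof (rule lborel_eqI[symmetric])
  fix l u :: "real^2"
  assume le: "\<And>b. b \<in> Basis \<Longrightarrow> l \<bullet> b \<le> u \<bullet> b"
  have Basis: "(Basis :: (real^2) set) = {axis 1 1, axis 2 1}" "axis 1 (1::real) \<noteq> (axis 2 1 :: real^2)"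
    by (auto simp: Basis_vec_def UNIV_2 axis_eq_axis)
  have "vec_of_complex -` box l u = box (complex_of_vec l) (complex_of_vec u)"
    by (auto simp: vec_of_complex_def complex_of_vec_def mem_box_cart mem_box Basis_complex_def forall_2)
  moreover have "l$1 \<le> u$1" "l$2 \<le> u$2"
    using le[of "axis 1 1"] le[of "axis 2 1"] by (auto simp: Basis cart_eq_inner_axis inner_commute)
  ultimately show "emeasure (distr lborel borel vec_of_complex) (box l u) = (\<Prod>b\<in>Basis. (u - l) \<bullet> b)"
    by (simp add: emeasure_distr emeasure_lborel_box_eq Basis_complex_def Basis complex_of_vec_def
        inner_axis inner_axis' inner_commute)
qed simp

lemma distr_lborel_complex_of_vec: "distr lborel borel complex_of_vec = lborel"
proof -
  have "distr lborel borel complex_of_vec =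
      distr (distr lborel borel vec_of_complex) borel complex_of_vec"
    by (simp only: distr_lborel_vec_of_complex)
  also have "\<dots> = distr lborel borel (complex_of_vec \<circ> vec_of_complex)"
    by (simp add: distr_distr)
  also have "complex_of_vec \<circ> vec_of_complex = (\<lambda>z. z)" by auto
  finally show ?thesis by (simp add: distr_id2)
qed

lemma distr_lborel_orthogonal_transformation:
  fixes T :: "real^'n::{finite,wellorder} \<Rightarrow> real^'n::_"
  assumes T: "orthogonal_transformation T"
  shows "distr lborel borel T = lborel"
proof (rule lborel_eqI[symmetric])
  have [measurable]: "T \<in> borel_measurable borel"
    using T by (simp add: borel_measurable_linear orthogonal_transformation_linear)
  fix l u :: "real^'n::{finite,wellorder}"
  assume "\<And>b. b \<in> Basis \<Longrightarrow> l \<bullet> b \<le> u \<bullet> b"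
  then have box: "emeasure lborel (box l u) = (\<Prod>b\<in>Basis. (u - l) \<bullet> b)"
    by (simp add: emeasure_lborel_box_eq)
  have T': "orthogonal_transformation (inv T)"
    by (rule orthogonal_transformation_inv[OF T])
  have preimage: "T -` box l u = inv T ` box l u"
    using bij_vimage_eq_inv_image[OF orthogonal_transformation_bij[OF T]] .
  moreover have "bounded (inv T ` box l u)"
    using T' orthogonal_transformation_linear linear_conv_bounded_linear bounded_linear_image bounded_box
    by blast
  moreover have "inv T ` box l u \<in> sets borel"
    unfolding preimage[symmetric] by (rule measurable_sets_borel[of T borel]) auto
  moreover have "measure lborel (inv T ` box l u) = measure lborel (box l u)"
    using measure_orthogonal_image[OF T', of "box l u"] \<open>inv T ` box l u \<in> sets borel\<close> by simp
  ultimately have "emeasure lborel (T -` box l u) = emeasure lborel (box l u)"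
    using emeasure_bounded_finite[of "inv T ` box l u"] emeasure_bounded_finite[OF bounded_box, of l u]
    by (simp add: emeasure_eq_ennreal_measure less_top)
  then show "emeasure (distr lborel borel T) (box l u) = (\<Prod>b\<in>Basis. (u - l) \<bullet> b)"
    by (simp add: emeasure_distr box)
qed simp

lemma distr_lborel_mult_unimodular:
  fixes c :: complex
  assumes c: "norm c = 1"
  shows "distr lborel borel (\<lambda>z. c * z) = lborel"
proof -
  define T where "T v = vec_of_complex (c * complex_of_vec v)" for v
  have "T v \<bullet> T w = v \<bullet> w" for v w
  proof -
    have "(Re c)\<^sup>2 + (Im c)\<^sup>2 = 1" using c by (simp add: cmod_def)
    have "T v \<bullet> T w = (Re c * v$1 - Im c * v$2) * (Re c * w$1 - Im c * w$2)
        + (Re c * v$2 + Im c * v$1) * (Re c * w$2 + Im c * w$1)"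
      by (simp add: T_def vec_of_complex_def complex_of_vec_def inner_vec_def sum_2)
    also have "\<dots> = ((Re c)\<^sup>2 + (Im c)\<^sup>2) * (v$1 * w$1 + v$2 * w$2)"
      by (simp add: algebra_simps power2_eq_square)
    finally show ?thesis
      using \<open>(Re c)\<^sup>2 + (Im c)\<^sup>2 = 1\<close> by (simp add: inner_vec_def sum_2)
  qed
  moreover have "linear T"
    unfolding T_def by (rule linearI) (auto simp: vec_of_complex_def complex_of_vec_def vec_eq_iff
        forall_2 algebra_simps)
  ultimately have T: "orthogonal_transformation T"
    by (simp add: orthogonal_transformation_def)
  then have [measurable]: "T \<in> borel_measurable borel"
    by (simp add: borel_measurable_linear orthogonal_transformation_linear)
  have "distr lborel borel (\<lambda>z. c * z) = distr lborel borel (complex_of_vec \<circ> T \<circ> vec_of_complex)"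
    by (rule arg_cong[where f = "distr lborel borel"]) (auto simp: T_def)
  also have "\<dots> = distr (distr (distr lborel borel vec_of_complex) borel T) borel complex_of_vec"
    by (simp add: distr_distr comp_assoc)
  also have "\<dots> = lborel"
    by (simp add: distr_lborel_vec_of_complex distr_lborel_orthogonal_transformation[OF T]
        distr_lborel_complex_of_vec)
  finally show ?thesis .
qed

lemma integral_unit_disk_power_eq_0:
  assumes n: "n \<ge> 1"
  shows "(\<integral>z. indicator (ball 0 1) z *\<^sub>R z ^ n \<partial>lborel) = (0::complex)"
proof -
  define c where "c = cis (pi / n)"
  have c: "norm c = 1" by (simp add: c_def)
  have "c ^ n = cis (real n * (pi / real n))"
    unfolding c_def by (rule Complex.DeMoivre)
  with n have cn: "c ^ n = -1" by simp
  define F where "F = (\<lambda>z::complex. indicator (ball 0 1) z *\<^sub>R z ^ n)"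
  have [measurable]: "F \<in> borel_measurable borel"
    unfolding F_def by (intro borel_measurable_continuous_on_indicator) (auto intro!: continuous_intros)
  have "integral\<^sup>L lborel F = integral\<^sup>L (distr lborel borel (\<lambda>z. c * z)) F"
    by (simp only: distr_lborel_mult_unimodular[OF c])
  also have "\<dots> = (\<integral>z. F (c * z) \<partial>lborel)"
    by (rule integral_distr) simp_all
  also have "\<dots> = (\<integral>z. - F z \<partial>lborel)"
    using c by (intro Bochner_Integration.integral_cong)
      (auto simp: F_def indicator_def norm_mult power_mult_distrib cn)
  also have "\<dots> = - integral\<^sup>L lborel F"
    by simp
  finally show ?thesis
    by (simp add: F_def)
qed

lemma integrable_indicator_ball_continuous:
  fixes h :: "'a::euclidean_space \<Rightarrow> 'b::{banach, second_countable_topology}"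
  assumes "continuous_on (cball c r) h"
  shows "integrable lborel (\<lambda>z. indicator (ball c r) z *\<^sub>R h z)"
proof -
  have "integrable lborel (\<lambda>z. indicator (ball c r) z *\<^sub>R (indicator (cball c r) z *\<^sub>R h z))"
    by (intro integrable_mult_indicator borel_integrable_compact assms) auto
  also have "(\<lambda>z. indicator (ball c r) z *\<^sub>R (indicator (cball c r) z *\<^sub>R h z)) =
      (\<lambda>z. indicator (ball c r) z *\<^sub>R h z)"
    by (auto simp: indicator_def)
  finally show ?thesis .
qed

lemma summable_norm_Taylor_coeffs:
  fixes g :: "complex \<Rightarrow> complex"
  assumes R: "R > 1" and g: "g holomorphic_on ball 0 R"
  shows "summable (\<lambda>n. norm ((deriv ^^ n) g 0 / fact n))"
proof -
  define \<rho> where "\<rho> = (1 + R) / 2"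
  have "norm (complex_of_real \<rho>) = \<rho>"
    unfolding norm_of_real using R by (simp add: \<rho>_def)
  then have "complex_of_real \<rho> \<in> ball 0 R" and norm_less: "norm (1::complex) < norm (complex_of_real \<rho>)"
    using R by (auto simp: \<rho>_def)
  from holomorphic_power_series[OF g this(1)]
  have "(\<lambda>n. (deriv ^^ n) g 0 / fact n * complex_of_real \<rho> ^ n) sums g \<rho>"
    by simp
  then have "summable (\<lambda>n. (deriv ^^ n) g 0 / fact n * complex_of_real \<rho> ^ n)"
    by (rule sums_summable)
  from powser_insidea[OF this norm_less] show ?thesis
    by simp
qed

lemma integral_unit_disk_power_series:
  fixes a :: "nat \<Rightarrow> complex"
  assumes summable_a: "summable (\<lambda>n. norm (a n))"
  shows "(\<integral>z. indicator (ball 0 1) z *\<^sub>R (\<Sum>n. a n * z ^ n) \<partial>lborel) = pi * a 0"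
proof -
  define f where "f n z = indicator (ball 0 1) z *\<^sub>R (a n * z ^ n)" for n z
  have int_f: "integrable lborel (f n)" for n
    unfolding f_def by (intro integrable_indicator_ball_continuous continuous_intros)
  have norm_f: "norm (f n z) \<le> norm (a n) * indicator (ball 0 1) z" for n z
    by (cases "z \<in> ball 0 1")
      (auto simp: f_def norm_mult norm_power intro!: mult_left_le power_le_one)
  have "norm (f n z) \<le> norm (a n)" for n z
    using norm_f[of n z] by (cases "z \<in> ball 0 1") auto
  then have "summable (\<lambda>n. norm (f n z))" for z
    by (intro summable_comparison_test'[OF summable_a]) simp
  moreover have "summable (\<lambda>n. \<integral>z. norm (f n z) \<partial>lborel)"
  proof (rule summable_comparison_test'[OF summable_mult2[OF summable_a, of pi]])
    fix n
    have "(\<integral>z. norm (f n z) \<partial>lborel) \<le> (\<integral>z. norm (a n) * indicator (ball (0::complex) 1) z \<partial>lborel)"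
      using norm_f int_f emeasure_lborel_ball_finite[of "0::complex" 1]
      by (intro Bochner_Integration.integral_mono) (auto simp: integrable_indicator_iff)
    then show "norm (\<integral>z. norm (f n z) \<partial>lborel) \<le> norm (a n) * pi"
      by (simp add: content_ball unit_ball_vol_2)
  qed
  ultimately have termwise: "(\<integral>z. (\<Sum>n. f n z) \<partial>lborel) = (\<Sum>n. integral\<^sup>L lborel (f n))"
    by (intro integral_suminf int_f) auto
  have integral_f: "integral\<^sup>L lborel (f n) = (if n = 0 then pi * a 0 else 0)" for n
  proof (cases "n = 0")
    case True
    have "f 0 = (\<lambda>z. a 0 * complex_of_real (indicator (ball 0 1) z))"
      by (auto simp: f_def indicator_def)
    with True show ?thesis
      by (simp add: content_ball unit_ball_vol_2)
  next
    case False
    have "f n = (\<lambda>z. a n * (indicator (ball 0 1) z *\<^sub>R z ^ n))"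
      by (auto simp: f_def indicator_def)
    then have "integral\<^sup>L lborel (f n) = a n * (\<integral>z. indicator (ball 0 1) z *\<^sub>R z ^ n \<partial>lborel)"
      by (simp only: integral_mult_right_zero)
    with False show ?thesis
      using integral_unit_disk_power_eq_0[of n] by simp
  qed
  have "indicator (ball 0 1) z *\<^sub>R (\<Sum>n. a n * z ^ n) = (\<Sum>n. f n z)" for z
    by (cases "z \<in> ball 0 1") (simp_all add: f_def)
  then have "(\<integral>z. indicator (ball 0 1) z *\<^sub>R (\<Sum>n. a n * z ^ n) \<partial>lborel) = (\<Sum>n. integral\<^sup>L lborel (f n))"
    by (simp only: termwise)
  also have "\<dots> = pi * a 0"
    unfolding integral_f using sums_single[of 0 "\<lambda>_. of_real pi * a 0"] by (simp add: sums_iff)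
  finally show ?thesis .
qed

lemma integral_unit_disk_holomorphic:
  fixes g :: "complex \<Rightarrow> complex"
  assumes R: "R > 1" and g: "g holomorphic_on ball 0 R"
  shows "(\<integral>z. indicator (ball 0 1) z *\<^sub>R g z \<partial>lborel) = pi * g 0"
proof -
  define a where "a n = (deriv ^^ n) g 0 / fact n" for n
  have series: "indicator (ball 0 1) z *\<^sub>R g z = indicator (ball 0 1) z *\<^sub>R (\<Sum>n. a n * z ^ n)" for z
    using sums_unique[OF holomorphic_power_series[OF g, of z]] R
    by (cases "z \<in> ball 0 1") (auto simp: a_def)
  have "summable (\<lambda>n. norm (a n))"
    unfolding a_def by (rule summable_norm_Taylor_coeffs[OF R g])
  then show ?thesis
    unfolding series by (subst integral_unit_disk_power_series) (simp_all add: a_def)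
qed

lemma sectorG_D:
  assumes "z \<in> sectorG"
  shows "0 < Re z" and "(cmod z)\<^sup>2 \<le> 2 * (Re z)\<^sup>2"
proof -
  from assms have "z \<noteq> 0" and arg: "\<bar>Arg z\<bar> < pi / 4"
    by (auto simp: sectorG_def)
  have re: "Re z = cmod z * cos (Arg z)" and im: "Im z = cmod z * sin (Arg z)"
    by (metis Re_rcis Im_rcis rcis_cmod_Arg)+
  have "0 < cos (Arg z)"
    using arg by (intro cos_gt_zero_pi) auto
  with \<open>z \<noteq> 0\<close> show "0 < Re z"
    by (simp add: re)
  have "0 < cos (2 * Arg z)"
    using arg by (intro cos_gt_zero_pi) auto
  then have "(sin (Arg z))\<^sup>2 \<le> (cos (Arg z))\<^sup>2"
    by (simp add: cos_double)
  then have "(Im z)\<^sup>2 \<le> (Re z)\<^sup>2"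
    by (simp add: re im power_mult_distrib mult_left_mono)
  then show "(cmod z)\<^sup>2 \<le> 2 * (Re z)\<^sup>2"
    by (simp add: cmod_power2)
qed



lemma le_scaled_square_add_inverse:
  fixes t y :: real
  assumes t: "0 < t"
  shows "y \<le> t / 2 * y\<^sup>2 + 1 / (2 * t)"
proof -
  have "0 \<le> (t * y - 1)\<^sup>2 / (2 * t)"
    using t by simp
  also have "\<dots> = t / 2 * y\<^sup>2 + 1 / (2 * t) - y"
    using t by (simp add: field_simps power2_eq_square)
  finally show ?thesis
    by simp
qed

lemma measure_superlevel_set_lower_bound:
  fixes u v :: "'a \<Rightarrow> real"
  assumes D: "D \<in> sets M" "emeasure M D < \<infinity>"
    and sets_E: "{x \<in> D. a / 2 < u x} \<in> sets M"
    and int_u: "integrable M (\<lambda>x. indicator D x * u x)"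
    and int_v: "integrable M (\<lambda>x. indicator D x * (v x)\<^sup>2)"
    and u_le_v: "\<And>x. x \<in> D \<Longrightarrow> u x \<le> v x"
    and mean: "(\<integral>x. indicator D x * u x \<partial>M) = measure M D * a"
    and mean_pos: "0 < measure M D * a"
    and L2: "(\<integral>x. indicator D x * (v x)\<^sup>2 \<partial>M) \<le> B" and B: "0 < B"
  shows "(measure M D * a)\<^sup>2 \<le> 4 * B * measure M {x \<in> D. a / 2 < u x}"
proof -
  define E where "E = {x \<in> D. a / 2 < u x}"
  define m where "m = measure M D"
  have a: "0 < a" and m: "0 < m"
    using mean_pos measure_nonneg[of M D] by (auto simp: m_def zero_less_mult_iff)
  define t where "t = m * a / (2 * B)"
  have t: "0 < t"
    using a m B by (simp add: t_def)
  have pointwise: "indicator D x * u x \<le>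
      t / 2 * (indicator D x * (v x)\<^sup>2) + 1 / (2 * t) * indicator E x + a / 2 * indicator D x" for x
  proof (cases "x \<in> D")
    case True
    then have "u x \<le> t / 2 * (v x)\<^sup>2 + 1 / (2 * t)"
      using u_le_v le_scaled_square_add_inverse[OF t] order_trans by blast
    moreover have "0 \<le> t / 2 * (v x)\<^sup>2"
      using t by simp
    ultimately show ?thesis
      using True a by (auto simp: E_def indicator_def)
  qed (simp add: E_def)
  have E_finite: "emeasure M E < \<infinity>"
    using emeasure_mono[of E D M] D by (auto simp: E_def)
  have "m * a \<le> (\<integral>x. t / 2 * (indicator D x * (v x)\<^sup>2) + 1 / (2 * t) * indicator E x
      + a / 2 * indicator D x \<partial>M)"
    unfolding m_def mean[symmetric] using int_u int_v D sets_E E_finite pointwise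
    by (intro Bochner_Integration.integral_mono) (auto simp: E_def)
  also have "\<dots> = t / 2 * (\<integral>x. indicator D x * (v x)\<^sup>2 \<partial>M) + 1 / (2 * t) * measure M E + a / 2 * m"
    using int_v D sets_E E_finite by (simp add: E_def m_def)
  also have "\<dots> \<le> t / 2 * B + 1 / (2 * t) * measure M E + a / 2 * m"
    using L2 t by simp
  finally have "m * a \<le> t / 2 * B + 1 / (2 * t) * measure M E + a / 2 * m" .
  moreover have "t / 2 * B = m * a / 4" and "1 / (2 * t) = B / (m * a)"
    unfolding t_def using a m B by (simp_all add: field_simps)
  ultimately have "m * a / 4 \<le> B / (m * a) * measure M E"
    by (simp only: mult.commute[of "a / 2"] times_divide_eq_left[of m])
  then have "(m * a)\<^sup>2 \<le> 4 * B * measure M E"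
    using a m by (simp add: field_simps power2_eq_square)
  then show ?thesis
    unfolding E_def m_def .
qed

lemma open_superlevel_Re:
  assumes "continuous_on S f" and "open S"
  shows "open {z \<in> S. c < Re (f z)}"
proof -
  have "open (S \<inter> f -` {w. c < Re w})"
    using assms by (intro continuous_open_preimage open_halfspace_Re_gt)
  also have "S \<inter> f -` {w. c < Re w} = {z \<in> S. c < Re (f z)}"
    by auto
  finally show ?thesis .
qed

lemma L2_norm_sq_disk_eq_integral:
  assumes "continuous_on (cball 0 1) g"
  shows "L2_norm_sq_disk g = ennreal ((\<integral>z. indicator (ball 0 1) z * (cmod (g z))\<^sup>2 \<partial>lborel) / pi)"
proof -
  have "integrable lborel (\<lambda>z. indicator (ball 0 1) z * (cmod (g z))\<^sup>2)"
    using integrable_indicator_ball_continuous[of 0 1 "\<lambda>z. (cmod (g z))\<^sup>2"] assms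
    by (simp add: continuous_intros)
  then have "(\<integral>\<^sup>+ z. indicator (ball 0 1) z * ennreal ((cmod (g z))\<^sup>2) \<partial>lborel) =
      ennreal (\<integral>z. indicator (ball 0 1) z * (cmod (g z))\<^sup>2 \<partial>lborel)"
    by (subst nn_integral_eq_integral[symmetric]) (auto intro!: nn_integral_cong simp: indicator_def)
  then show ?thesis
    by (simp add: L2_norm_sq_disk_def divide_ennreal integral_nonneg)
qed

lemma integral_unit_disk_Re_holomorphic:
  fixes g :: "complex \<Rightarrow> complex"
  assumes R: "R > 1" and g: "g holomorphic_on ball 0 R"
  shows "(\<integral>z. indicator (ball 0 1) z * Re (g z) \<partial>lborel) = pi * Re (g 0)"
proof -
  have "cball 0 1 \<subseteq> ball (0::complex) R"
    using R by auto
  then have "continuous_on (cball 0 1) g"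
    using g holomorphic_on_imp_continuous_on continuous_on_subset by blast
  then have "(\<integral>z. Re (indicator (ball 0 1) z *\<^sub>R g z) \<partial>lborel) =
      Re (\<integral>z. indicator (ball 0 1) z *\<^sub>R g z \<partial>lborel)"
    by (intro integral_bounded_linear bounded_linear_Re integrable_indicator_ball_continuous)
  then show ?thesis
    using integral_unit_disk_holomorphic[OF R g] by simp
qed

lemma integral_unit_disk_norm_sq_le:
  fixes g :: "complex \<Rightarrow> complex"
  assumes gc: "continuous_on (cball 0 1) g" and g0: "g 0 \<in> sectorG"
    and L2: "L2_norm_sq_disk g \<le> ennreal ((K * cmod (g 0))\<^sup>2)"
  shows "(\<integral>z. indicator (ball 0 1) z * (cmod (g z))\<^sup>2 \<partial>lborel) \<le> 2 * pi * K\<^sup>2 * (Re (g 0))\<^sup>2"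
proof -
  have "(\<integral>z. indicator (ball 0 1) z * (cmod (g z))\<^sup>2 \<partial>lborel) / pi \<le> (K * cmod (g 0))\<^sup>2"
    using L2 L2_norm_sq_disk_eq_integral[OF gc] by simp
  also have "\<dots> \<le> K\<^sup>2 * (2 * (Re (g 0))\<^sup>2)"
    unfolding power_mult_distrib using sectorG_D(2)[OF g0] by (intro mult_left_mono) auto
  finally show ?thesis
    by (simp add: field_simps)
qed

lemma measure_superlevel_unit_disk:
  fixes g :: "complex \<Rightarrow> complex"
  assumes K: "K > 0" and R: "R > 1" and g: "g holomorphic_on ball 0 R"
    and gG: "g ` ball 0 1 \<subseteq> sectorG"
    and L2: "L2_norm_sq_disk g \<le> ennreal ((K * cmod (g 0))\<^sup>2)"
  shows "pi / (8 * K\<^sup>2) \<le> measure lborel {w \<in> ball 0 1. Re (g w) > Re (g 0) / 2}"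
proof -
  define a where "a = Re (g 0)"
  have g0: "g 0 \<in> sectorG"
    using gG by auto
  then have a: "0 < a"
    unfolding a_def by (rule sectorG_D)
  have "cball 0 1 \<subseteq> ball (0::complex) R"
    using R by auto
  then have gc: "continuous_on (cball 0 1) g"
    using g holomorphic_on_imp_continuous_on continuous_on_subset by blast
  have disk: "measure lborel (ball (0::complex) 1) = pi"
    by (simp add: content_ball unit_ball_vol_2)
  have mean: "(\<integral>z. indicator (ball 0 1) z * Re (g z) \<partial>lborel) = pi * a"
    unfolding a_def by (rule integral_unit_disk_Re_holomorphic[OF R g])
  have L2': "(\<integral>z. indicator (ball 0 1) z * (cmod (g z))\<^sup>2 \<partial>lborel) \<le> 2 * pi * K\<^sup>2 * a\<^sup>2"
    unfolding a_def by (rule integral_unit_disk_norm_sq_le[OF gc g0 L2])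
  have "(pi * a)\<^sup>2 \<le> 4 * (2 * pi * K\<^sup>2 * a\<^sup>2) * measure lborel {w \<in> ball 0 1. a / 2 < Re (g w)}"
  proof (rule measure_superlevel_set_lower_bound[where M = lborel and D = "ball 0 1" and u = "\<lambda>z. Re (g z)"
        and v = "\<lambda>z. cmod (g z)", unfolded disk])
    have "open {w \<in> ball 0 1. a / 2 < Re (g w)}"
      using gc by (intro open_superlevel_Re continuous_on_subset[OF gc]) auto
    then show "{w \<in> ball 0 1. a / 2 < Re (g w)} \<in> sets lborel"
      by simp
    show "integrable lborel (\<lambda>z. indicator (ball 0 1) z * Re (g z))"
      "integrable lborel (\<lambda>z. indicator (ball 0 1) z * (cmod (g z))\<^sup>2)"
      using integrable_indicator_ball_continuous[of 0 1 "\<lambda>z. Re (g z)"]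
        integrable_indicator_ball_continuous[of 0 1 "\<lambda>z. (cmod (g z))\<^sup>2"] gc
      by (simp_all add: continuous_intros)
    show "emeasure lborel (ball (0::complex) 1) < \<infinity>"
      by (rule emeasure_lborel_ball_finite)
    show "0 < 2 * pi * K\<^sup>2 * a\<^sup>2"
      using a K by simp
  qed (simp_all add: mean L2' a complex_Re_le_cmod)
  then have "pi * (pi * a\<^sup>2) \<le> pi * (8 * K\<^sup>2 * a\<^sup>2 * measure lborel {w \<in> ball 0 1. a / 2 < Re (g w)})"
    by (simp add: power_mult_distrib power2_eq_square algebra_simps)
  then have "pi * a\<^sup>2 \<le> 8 * K\<^sup>2 * a\<^sup>2 * measure lborel {w \<in> ball 0 1. a / 2 < Re (g w)}"
    by simp
  then show ?thesis
    using a K by (simp add: a_def field_simps)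
qed

lemma measure_lborel_affine_preimage:
  fixes z0 :: "'a::euclidean_space"
  assumes s: "s > 0" and A: "A \<in> sets borel"
  shows "measure lborel A = s ^ DIM('a) * measure lborel ((\<lambda>x. z0 + s *\<^sub>R x) -` A)"
proof -
  have "emeasure lborel A =
      emeasure (density (distr lborel borel (\<lambda>x. z0 + s *\<^sub>R x)) (\<lambda>_. ennreal (s ^ DIM('a)))) A"
    using s by (subst lborel_affine[of s z0]) auto
  also have "\<dots> = ennreal (s ^ DIM('a)) * emeasure lborel ((\<lambda>x. z0 + s *\<^sub>R x) -` A)"
    using A by (simp add: emeasure_density_const emeasure_distr)
  finally show ?thesis
    using s by (simp add: measure_def enn2real_mult)
qed

lemma measure_superlevel_smaller_ball:
  fixes f :: "complex \<Rightarrow> complex" and K2 :: real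
  assumes K2_pos: "K2 > 0"
    and K2_bound: "\<And>g. g holomorphic_on ball 0 1 \<Longrightarrow> g ` ball 0 1 \<subseteq> sectorG \<Longrightarrow>
           L2_norm_sq_disk g \<le> ennreal ((K2 * cmod (g 0))\<^sup>2)"
    and s: "0 < s" "s < r" and f: "f holomorphic_on ball z0 r" and fG: "f ` ball z0 r \<subseteq> sectorG"
  shows "s\<^sup>2 * (pi / (8 * K2\<^sup>2)) \<le> measure lborel {z \<in> ball z0 s. Re (f z) > Re (f z0) / 2}"
proof -
  define A where "A = {z \<in> ball z0 s. Re (f z) > Re (f z0) / 2}"
  define h where "h = (\<lambda>w. z0 + s *\<^sub>R w)"
  have h_ball: "h ` ball 0 (r / s) \<subseteq> ball z0 r"
  proof
    fix z assume "z \<in> h ` ball 0 (r / s)"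
    then obtain w where "norm w < r / s" and z: "z = z0 + s *\<^sub>R w"
      by (auto simp: h_def)
    then have "s * norm w < r"
      using s by (simp add: field_simps)
    then show "z \<in> ball z0 r"
      using s by (simp add: z dist_norm)
  qed
  have hol: "f \<circ> h holomorphic_on ball 0 (r / s)"
    using f h_ball by (intro holomorphic_on_compose_gen[of h _ f "ball z0 r"])
      (auto simp: h_def scaleR_conv_of_real intro!: holomorphic_intros)
  have R: "1 < r / s"
    using s by simp
  then have sub: "ball 0 1 \<subseteq> ball (0::complex) (r / s)"
    by (intro subset_ball) simp
  then have img: "(f \<circ> h) ` ball 0 1 \<subseteq> sectorG"
    using h_ball fG by auto
  have "pi / (8 * K2\<^sup>2) \<le> measure lborel {w \<in> ball 0 1. Re ((f \<circ> h) w) > Re ((f \<circ> h) 0) / 2}"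
    using K2_bound[OF holomorphic_on_subset[OF hol sub] img]
    by (rule measure_superlevel_unit_disk[OF K2_pos R hol img])
  also have "{w \<in> ball 0 1. Re ((f \<circ> h) w) > Re ((f \<circ> h) 0) / 2} = h -` A"
    using s by (auto simp: A_def h_def dist_norm)
  finally have "s\<^sup>2 * (pi / (8 * K2\<^sup>2)) \<le> s\<^sup>2 * measure lborel (h -` A)"
    by (rule mult_left_mono) simp
  also have "\<dots> = measure lborel A"
  proof -
    have "ball z0 s \<subseteq> ball z0 r"
      using s by (intro subset_ball) simp
    then have "continuous_on (ball z0 s) f"
      using f holomorphic_on_imp_continuous_on holomorphic_on_subset by blast
    then have "A \<in> sets borel"
      unfolding A_def by (intro borel_open open_superlevel_Re) auto
    then show ?thesis
      using measure_lborel_affine_preimage[OF s(1), of A z0] by (simp add: h_def)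
  qed
  finally show ?thesis
    by (simp add: A_def)
qed

lemma measure_superlevel_ball_mono:
  assumes f: "continuous_on (ball c r) f" and "s \<le> r"
  shows "measure lborel {z \<in> ball c s. t < Re (f z)} \<le> measure lborel {z \<in> ball c r. t < Re (f z)}"
proof (rule measure_mono_fmeasurable)
  show "{z \<in> ball c s. t < Re (f z)} \<subseteq> {z \<in> ball c r. t < Re (f z)}"
    using \<open>s \<le> r\<close> by auto
  have "continuous_on (ball c s) f"
    using f \<open>s \<le> r\<close> by (rule continuous_on_subset[OF _ subset_ball])
  then have "open {z \<in> ball c s. t < Re (f z)}"
    by (rule open_superlevel_Re) simp
  then show "{z \<in> ball c s. t < Re (f z)} \<in> sets lborel"
    by simp
  have "open {z \<in> ball c r. t < Re (f z)}"
    using f by (rule open_superlevel_Re) simp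
  moreover have "bounded {z \<in> ball c r. t < Re (f z)}"
    by (rule bounded_subset[OF bounded_ball]) auto
  ultimately show "{z \<in> ball c r. t < Re (f z)} \<in> fmeasurable lborel"
    by (intro fmeasurableI emeasure_bounded_finite) simp_all
qed

lemma measure_superlevel_ball:
  fixes f :: "complex \<Rightarrow> complex" and K2 :: real
  assumes K2_pos: "K2 > 0"
    and K2_bound: "\<And>g. g holomorphic_on ball 0 1 \<Longrightarrow> g ` ball 0 1 \<subseteq> sectorG \<Longrightarrow>
           L2_norm_sq_disk g \<le> ennreal ((K2 * cmod (g 0))\<^sup>2)"
    and r: "r > 0" and f: "f holomorphic_on ball z0 r" and fG: "f ` ball z0 r \<subseteq> sectorG"
  shows "r\<^sup>2 * (pi / (8 * K2\<^sup>2)) \<le> measure lborel {z \<in> ball z0 r. Re (f z) > Re (f z0) / 2}"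
proof (rule dense_le_bounded)
  define c where "c = pi / (8 * K2\<^sup>2)"
  have c: "0 < c"
    using K2_pos by (simp add: c_def)
  then show "0 < r\<^sup>2 * (pi / (8 * K2\<^sup>2))"
    using r unfolding c_def[symmetric] by simp
  fix w
  assume w: "0 < w" "w < r\<^sup>2 * (pi / (8 * K2\<^sup>2))"
  define s where "s = sqrt (w / c)"
  have s: "0 < s" "s\<^sup>2 * c = w"
    using w c by (simp_all add: s_def)
  have "w / c < r\<^sup>2"
    using w c unfolding c_def[symmetric] by (simp add: divide_less_eq)
  then have "sqrt (w / c) < sqrt (r\<^sup>2)"
    by (rule real_sqrt_less_mono)
  then have "s < r"
    using r by (simp add: s_def)
  have "continuous_on (ball z0 r) f"
    using f by (rule holomorphic_on_imp_continuous_on)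
  then have "measure lborel {z \<in> ball z0 s. Re (f z) > Re (f z0) / 2}
      \<le> measure lborel {z \<in> ball z0 r. Re (f z) > Re (f z0) / 2}"
    using \<open>s < r\<close> by (rule measure_superlevel_ball_mono[OF _ less_imp_le])
  moreover have "s\<^sup>2 * c \<le> measure lborel {z \<in> ball z0 s. Re (f z) > Re (f z0) / 2}"
    unfolding c_def by (rule measure_superlevel_smaller_ball[OF K2_pos K2_bound s(1) \<open>s < r\<close> f fG])
  ultimately show "w \<le> measure lborel {z \<in> ball z0 r. Re (f z) > Re (f z0) / 2}"
    using s by simp
qed

lemma area_measure_eq_measure:
  assumes "bounded A"
  shows "area_measure A = ennreal (measure lborel A / pi)"
  using emeasure_bounded_finite[OF assms]
  by (simp add: area_measure_def emeasure_eq_ennreal_measure less_top divide_ennreal)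

lemma area_measure_ball:
  assumes "r \<ge> 0"
  shows "area_measure (ball z r) = ennreal (r\<^sup>2)"
  using assms by (simp add: area_measure_eq_measure content_ball unit_ball_vol_2)

theorem lemma3p7:
  fixes K2 :: real
  assumes K2_pos: "K2 > 0"
    and K2_bound: "\<And>g. g holomorphic_on ball 0 1 \<Longrightarrow> g ` ball 0 1 \<subseteq> sectorG \<Longrightarrow>
           L2_norm_sq_disk g \<le> ennreal ((K2 * cmod (g 0))\<^sup>2)"
  shows "\<And>(z0::complex) (r::real) f. r > 0 \<Longrightarrow> f holomorphic_on ball z0 r \<Longrightarrow>
           f ` ball z0 r \<subseteq> sectorG \<Longrightarrow>
           area_measure {z \<in> ball z0 r. Re (f z) > Re (f z0) / 2}
             \<ge> ennreal (1 / (8 * K2\<^sup>2)) * area_measure (ball z0 r)"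
proof -
  fix z0 :: complex and r :: real and f :: "complex \<Rightarrow> complex"
  assume r: "r > 0" and f: "f holomorphic_on ball z0 r" and fG: "f ` ball z0 r \<subseteq> sectorG"
  define A where "A = {z \<in> ball z0 r. Re (f z) > Re (f z0) / 2}"
  have "r\<^sup>2 * (pi / (8 * K2\<^sup>2)) \<le> measure lborel A"
    unfolding A_def by (rule measure_superlevel_ball[OF K2_pos K2_bound r f fG])
  then have "1 / (8 * K2\<^sup>2) * r\<^sup>2 \<le> measure lborel A / pi"
    by (simp add: field_simps)
  then have "ennreal (1 / (8 * K2\<^sup>2)) * ennreal (r\<^sup>2) \<le> ennreal (measure lborel A / pi)"
    by (simp add: ennreal_mult'[symmetric] ennreal_leI)
  moreover have "bounded A"
    by (rule bounded_subset[OF bounded_ball]) (auto simp: A_def)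
  ultimately show "area_measure A \<ge> ennreal (1 / (8 * K2\<^sup>2)) * area_measure (ball z0 r)"
    using r by (simp only: area_measure_eq_measure area_measure_ball less_imp_le)
qed

end
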